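(* Let $p\in[1,\infty]$, let $\varphi_0,\varphi_1,\varphi$ be positive non-degenerate quasi-concave functions on $(0,\infty)$, let $\{\widetilde t_k\}$ be a discretizing sequence for $\varphi(\varphi_0,\varphi_1)$ and $\overline l_p=\big(l_p,\,l_p(1/\widetilde t_k)\big)$. Then $$\left((\overline l_p)_{\varphi_0,p},(\overline l_p)_{\varphi_1,p}\right)_{\varphi,p}=l_p\Big(\frac1{\varphi(\varphi_0,\varphi_1)(\widetilde t_i)}\Big).$$
   Context: A function $\psi:(0,\infty)\to(0,\infty)$ is non-degenerate quasi-concave if it is non-decreasing, $\psi(t)/t$ is non-increasing, and $\lim_{t\to0+}\psi(t)=\lim_{t\to\infty}\psi(t)/t=\lim_{t\to0+}t/\psi(t)=\lim_{t\to\infty}1/\psi(t)=0$. $\varphi(\varphi_0,\varphi_1)(t)=\varphi_0(t)\varphi(\varphi_1(t)/\varphi_0(t))$. A positive sequence is strongly increasing if $\inf_k a_{k+1}/a_k\ge2$, strongly decreasing if $\sup_k a_{k+1}/a_k\le1/2$. A strongly increasing $\{s_k\}_{k\in\mathbb Z}$ is a discretizing sequence for $\psi$ if $\{\psi(s_k)\}$ is strongly increasing, $\{\psi(s_k)/s_k\}$ is strongly decreasing, and $\mathbb Z=\mathbb Z_1\sqcup\mathbb Z_2$ with $\psi(s_{k+1})\le2\psi(s_k)$ for $k\in\mathbb Z_1$ and $\psi(s_k)/s_k\le2\psi(s_{k+1})/s_{k+1}$ for $k\in\mathbb Z_2$. For a Banach couple $\overline X$, $K(t,x;\overline X)=\inf_{x=x_0+x_1}(\|x_0\|_{X_0}+t\|x_1\|_{X_1})$,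 and $\overline X_{\psi,p}$ is the space of $x\in X_0+X_1$ with $\big(\sum_k(K(s_k,x;\overline X)/\psi(s_k))^p\big)^{1/p}<\infty$ (sup if $p=\infty$), $\{s_k\}$ a fixed discretizing sequence for $\psi$. For a positive weight $u$, $l_p(u)=\{a:\{a_iu_i\}\in l_p\}$ with norm $\|\{a_iu_i\}\|_{l_p}$. Sequences are indexed by $\mathbb Z$; equality means equal sets with equivalent norms. *)

theory Defs
  imports "HOL-Analysis.Analysis" "HOL-Library.Function_Algebras"
begin

definition nondeg_qc :: "(real \<Rightarrow> real) \<Rightarrow> bool" where
  "nondeg_qc \<psi> \<longleftrightarrow>
     (\<forall>t>0. \<psi> t > 0) \<and>
     (\<forall>s t. 0 < s \<longrightarrow> s \<le> t \<longrightarrow> \<psi> s \<le> \<psi> t) \<and>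
     (\<forall>s t. 0 < s \<longrightarrow> s \<le> t \<longrightarrow> \<psi> t / t \<le> \<psi> s / s) \<and>
     (\<psi> \<longlongrightarrow> 0) (at_right 0) \<and>
     ((\<lambda>t. \<psi> t / t) \<longlongrightarrow> 0) at_top \<and>
     ((\<lambda>t. t / \<psi> t) \<longlongrightarrow> 0) (at_right 0) \<and>
     ((\<lambda>t. 1 / \<psi> t) \<longlongrightarrow> 0) at_top"

definition comp_fun :: "(real \<Rightarrow> real) \<Rightarrow> (real \<Rightarrow> real) \<Rightarrow> (real \<Rightarrow> real) \<Rightarrow> real \<Rightarrow> real" where
  "comp_fun \<phi> \<phi>0 \<phi>1 t = \<phi>0 t * \<phi> (\<phi>1 t / \<phi>0 t)"

definition strongly_increasing :: "(int \<Rightarrow> real) \<Rightarrow> bool" where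
  "strongly_increasing a \<longleftrightarrow> (\<forall>k. a k > 0) \<and> (\<forall>k. a (k + 1) / a k \<ge> 2)"

definition strongly_decreasing :: "(int \<Rightarrow> real) \<Rightarrow> bool" where
  "strongly_decreasing a \<longleftrightarrow> (\<forall>k. a k > 0) \<and> (\<forall>k. a (k + 1) / a k \<le> 1 / 2)"

definition discretizing :: "(int \<Rightarrow> real) \<Rightarrow> (real \<Rightarrow> real) \<Rightarrow> bool" where
  "discretizing s \<psi> \<longleftrightarrow>
     strongly_increasing s \<and>
     strongly_increasing (\<lambda>k. \<psi> (s k)) \<and>
     strongly_decreasing (\<lambda>k. \<psi> (s k) / s k) \<and>
     (\<exists>Z1 Z2 :: int set. Z1 \<union> Z2 = UNIV \<and> Z1 \<inter> Z2 = {} \<and>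
        (\<forall>k\<in>Z1. \<psi> (s (k + 1)) \<le> 2 * \<psi> (s k)) \<and>
        (\<forall>k\<in>Z2. \<psi> (s k) / s k \<le> 2 * (\<psi> (s (k + 1)) / s (k + 1))))"

definition enn_powr :: "ennreal \<Rightarrow> real \<Rightarrow> ennreal" where
  "enn_powr x r = (if x = top then top else ennreal (enn2real x powr r))"

definition lp_enn :: "ennreal \<Rightarrow> (int \<Rightarrow> ennreal) \<Rightarrow> ennreal" where
  "lp_enn p f = (if p = top then (SUP k. f k)
     else enn_powr (\<integral>\<^sup>+ k. enn_powr (f k) (enn2real p) \<partial>count_space UNIV) (1 / enn2real p))"

text \<open>Norm of the weighted space l_p(u) (value top = not in the space).\<close>
definition lp_norm :: "ennreal \<Rightarrow> (int \<Rightarrow> real) \<Rightarrow> (int \<Rightarrow> real) \<Rightarrow> ennreal" where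
  "lp_norm p u a = lp_enn p (\<lambda>i. ennreal (\<bar>a i\<bar> * u i))"

definition Kfun :: "('a::plus \<Rightarrow> ennreal) \<Rightarrow> ('a \<Rightarrow> ennreal) \<Rightarrow> real \<Rightarrow> 'a \<Rightarrow> ennreal" where
  "Kfun N0 N1 t x = (INF z \<in> {(x0, x1). x0 + x1 = x}. N0 (fst z) + ennreal t * N1 (snd z))"

definition interp_norm :: "('a::plus \<Rightarrow> ennreal) \<Rightarrow> ('a \<Rightarrow> ennreal) \<Rightarrow> (real \<Rightarrow> real)
     \<Rightarrow> (int \<Rightarrow> real) \<Rightarrow> ennreal \<Rightarrow> 'a \<Rightarrow> ennreal" where
  "interp_norm N0 N1 \<psi> s p x = lp_enn p (\<lambda>k. Kfun N0 N1 (s k) x / ennreal (\<psi> (s k)))"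

text \<open>Equal sets with equivalent norms.\<close>
definition equiv_norms :: "('a \<Rightarrow> ennreal) \<Rightarrow> ('a \<Rightarrow> ennreal) \<Rightarrow> bool" where
  "equiv_norms N M \<longleftrightarrow> (\<exists>C::real. C > 0 \<and>
      (\<forall>x. N x \<le> ennreal C * M x \<and> M x \<le> ennreal C * N x))"

end

(*
  For a weighted couple (l_p(w0), l_p(w1)) the K-functional K(t, x) is equivalent to the l_p norm
  of x with weight min(w0, t w1): split x according to which of w0, t w1 is smaller.  Putting this
  into the discrete norm of X_{psi,p} and exchanging the two l_p sums turns that norm into the l_p
  norm of x with weight w0_i * || min(1, s_k / r_i) / psi(s_k) ||_{l_p(k)}, where r_i = w0_i / w1_i.
  For a discretizing sequence s the inner norm is equivalent to 1 / psi(r_i): the term at the index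
  where s crosses r_i is already of that size, and the terms decay geometrically on both sides.
  So (l_p(w0), l_p(w1))_{psi,p} = l_p(w0 / psi(w0 / w1)) with constants independent of the weights.
  Applied to (l_p, l_p(1/tt)) this gives l_p(1/phi_j(tt)) for j = 0, 1; as the construction respects
  equivalent norms, a second application yields the weight (1/phi0) / phi(phi1/phi0), which is
  1 / phi(phi0,phi1)(tt).
*)
theory Submission
  imports Defs
begin

section \<open>Powers and l_p norms of extended nonnegative sequences\<close>

lemma enn_powr_ennreal: "0 \<le> a \<Longrightarrow> enn_powr (ennreal a) q = ennreal (a powr q)"
  by (simp add: enn_powr_def)

lemma enn_powr_top [simp]: "enn_powr top q = top"
  by (simp add: enn_powr_def)

lemma enn_powr_0 [simp]: "enn_powr 0 q = 0"
  by (simp add: enn_powr_def)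

lemma enn_powr_powr_inverse: "q \<noteq> 0 \<Longrightarrow> enn_powr (enn_powr x q) (1 / q) = x"
  by (cases x) (simp_all add: enn_powr_ennreal powr_powr)

lemma enn_powr_mono: "0 \<le> q \<Longrightarrow> x \<le> y \<Longrightarrow> enn_powr x q \<le> enn_powr y q"
  by (cases x; cases y) (auto simp: enn_powr_ennreal powr_mono2 top_unique)

lemma enn_powr_mult: "0 < q \<Longrightarrow> enn_powr (x * y) q = enn_powr x q * enn_powr y q"
  by (cases x; cases y)
    (auto simp: enn_powr_ennreal ennreal_mult_top ennreal_top_mult ennreal_mult[symmetric] powr_mult)

lemma enn_powr_add_le:
  assumes "0 < q"
  shows "enn_powr (x + y) q \<le> ennreal (2 powr q) * (enn_powr x q + enn_powr y q)"
proof (cases "x = top \<or> y = top")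
  case False
  then obtain a b where ab: "x = ennreal a" "0 \<le> a" "y = ennreal b" "0 \<le> b"
    by (cases x; cases y) auto
  have "(a + b) powr q \<le> (2 * max a b) powr q"
    using ab assms by (intro powr_mono2) auto
  also have "\<dots> = 2 powr q * max a b powr q"
    using ab by (simp add: powr_mult)
  also have "\<dots> \<le> 2 powr q * (a powr q + b powr q)"
    by (intro mult_left_mono) (auto simp: max_def)
  finally show ?thesis
    using ab by (simp add: enn_powr_ennreal ennreal_plus[symmetric] ennreal_mult[symmetric] del: ennreal_plus)
qed (auto simp: ennreal_mult_top)

lemma lp_enn_mono:
  assumes "\<And>k. f k \<le> g k"
  shows "lp_enn p f \<le> lp_enn p g"
proof (cases "p = top")
  case False
  have "(\<integral>\<^sup>+ k. enn_powr (f k) (enn2real p) \<partial>count_space UNIV)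
      \<le> (\<integral>\<^sup>+ k. enn_powr (g k) (enn2real p) \<partial>count_space UNIV)"
    by (intro nn_integral_mono enn_powr_mono assms) simp
  then show ?thesis
    using False by (simp add: lp_enn_def enn_powr_mono)
qed (simp add: lp_enn_def SUP_mono' assms)

lemma lp_enn_cmult:
  assumes "0 < p"
  shows "lp_enn p (\<lambda>k. c * f k) = c * lp_enn p f"
proof (cases "p = top")
  case False
  define q where "q = enn2real p"
  have q: "0 < q"
    using assms False by (simp add: q_def enn2real_positive_iff top.not_eq_extremum)
  have "(\<integral>\<^sup>+ k. enn_powr (c * f k) q \<partial>count_space UNIV)
      = enn_powr c q * (\<integral>\<^sup>+ k. enn_powr (f k) q \<partial>count_space UNIV)"
    using q by (simp add: enn_powr_mult nn_integral_cmult)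
  then show ?thesis
    using False q by (simp add: lp_enn_def q_def[symmetric] enn_powr_mult enn_powr_powr_inverse)
qed (simp add: lp_enn_def SUP_mult_left_ennreal)

lemma lp_enn_ge_component:
  assumes "0 < p"
  shows "f k \<le> lp_enn p f"
proof (cases "p = top")
  case False
  define q where "q = enn2real p"
  have q: "0 < q"
    using assms False by (simp add: q_def enn2real_positive_iff top.not_eq_extremum)
  have "enn_powr (f k) q \<le> (\<integral>\<^sup>+ k. enn_powr (f k) q \<partial>count_space UNIV)"
    by (rule nn_integral_ge_point) simp
  then have "enn_powr (enn_powr (f k) q) (1 / q) \<le> lp_enn p f"
    using False q by (simp add: lp_enn_def q_def[symmetric] enn_powr_mono)
  then show ?thesis
    using q by (simp add: enn_powr_powr_inverse)
qed (simp add: lp_enn_def SUP_upper)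

lemma lp_enn_swap:
  assumes "0 < p"
  shows "lp_enn p (\<lambda>k. lp_enn p (\<lambda>i. f k i)) = lp_enn p (\<lambda>i. lp_enn p (\<lambda>k. f k i))"
proof (cases "p = top")
  case False
  define q where "q = enn2real p"
  have q: "0 < q"
    using assms False by (simp add: q_def enn2real_positive_iff top.not_eq_extremum)
  have inverse: "enn_powr (enn_powr x (1 / q)) q = x" for x
    using enn_powr_powr_inverse[of "1 / q" x] q by simp
  have "(\<integral>\<^sup>+ k. (\<integral>\<^sup>+ i. enn_powr (f k i) q \<partial>count_space UNIV) \<partial>count_space UNIV)
      = (\<integral>\<^sup>+ i. (\<integral>\<^sup>+ k. enn_powr (f k i) q \<partial>count_space UNIV) \<partial>count_space UNIV)"
    by (rule nn_integral_count_space_nn_integral) simp_all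
  moreover have "lp_enn p h = enn_powr (\<integral>\<^sup>+ k. enn_powr (h k) q \<partial>count_space UNIV) (1 / q)" for h
    using False by (simp add: lp_enn_def q_def)
  ultimately show ?thesis
    by (simp add: inverse)
qed (simp add: lp_enn_def, rule SUP_commute)

(* The constant is crude (no Minkowski inequality): only equivalence of norms is ever claimed. *)
lemma lp_enn_add_le:
  assumes "1 \<le> p"
  shows "lp_enn p (\<lambda>k. f k + g k) \<le> 4 * (lp_enn p f + lp_enn p g)"
proof (cases "p = top")
  case True
  have "(SUP k. f k + g k) \<le> (SUP k. f k) + (SUP k. g k)"
    by (intro SUP_least add_mono SUP_upper) simp_all
  also have "\<dots> \<le> 4 * ((SUP k. f k) + (SUP k. g k))"
    using mult_right_mono[of 1 4 "(SUP k. f k) + (SUP k. g k)"] by simp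
  finally show ?thesis
    using True by (simp add: lp_enn_def)
next
  case False
  define q where "q = enn2real p"
  have q: "1 \<le> q"
    using assms False by (cases p) (auto simp: q_def)
  define F where "F = (\<integral>\<^sup>+ k. enn_powr (f k) q \<partial>count_space UNIV)"
  define G where "G = (\<integral>\<^sup>+ k. enn_powr (g k) q \<partial>count_space UNIV)"
  have two: "enn_powr (ennreal (2 powr q)) (1 / q) = 2"
    using q by (simp add: enn_powr_ennreal powr_powr)
  have two_root: "ennreal (2 powr (1 / q)) \<le> 2"
    using q powr_mono[of "1 / q" 1 2] ennreal_leI[of "2 powr (1 / q)" 2] by simp
  have "(\<integral>\<^sup>+ k. enn_powr (f k + g k) q \<partial>count_space UNIV)
      \<le> (\<integral>\<^sup>+ k. ennreal (2 powr q) * (enn_powr (f k) q + enn_powr (g k) q) \<partial>count_space UNIV)"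
    using q by (intro nn_integral_mono enn_powr_add_le) simp
  also have "\<dots> = ennreal (2 powr q) * (F + G)"
    by (simp add: F_def G_def nn_integral_cmult nn_integral_add)
  finally have "lp_enn p (\<lambda>k. f k + g k) \<le> enn_powr (ennreal (2 powr q) * (F + G)) (1 / q)"
    using False q by (simp add: lp_enn_def q_def[symmetric] enn_powr_mono)
  also have "\<dots> = 2 * enn_powr (F + G) (1 / q)"
    using q by (simp add: enn_powr_mult two)
  also have "\<dots> \<le> 2 * (ennreal (2 powr (1 / q)) * (enn_powr F (1 / q) + enn_powr G (1 / q)))"
    using q by (intro mult_left_mono enn_powr_add_le) simp_all
  also have "\<dots> \<le> 2 * (2 * (enn_powr F (1 / q) + enn_powr G (1 / q)))"
    by (intro mult_left_mono mult_right_mono two_root) simp_all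
  also have "\<dots> = 4 * (lp_enn p f + lp_enn p g)"
    using False by (simp add: lp_enn_def q_def[symmetric] F_def G_def mult.assoc[symmetric])
  finally show ?thesis .
qed

lemma nn_integral_half_power_nat:
  "(\<integral>\<^sup>+ n. ennreal ((1 / 2 :: real) ^ n) \<partial>count_space UNIV) = 2"
proof -
  have "(\<integral>\<^sup>+ n. ennreal ((1 / 2 :: real) ^ n) \<partial>count_space UNIV) = ennreal (\<Sum>n. (1 / 2 :: real) ^ n)"
    by (simp add: nn_integral_count_space_nat suminf_ennreal2 summable_geometric)
  also have "(\<Sum>n. (1 / 2 :: real) ^ n) = 2"
    using suminf_geometric[of "1 / 2 :: real"] by simp
  finally show ?thesis by simp
qed

lemma nn_integral_half_power_dist_le:
  "(\<integral>\<^sup>+ k. ennreal ((1 / 2 :: real) ^ nat \<bar>k - m\<bar>) \<partial>count_space (UNIV :: int set)) \<le> 4"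
proof -
  define f where "f k = ennreal ((1 / 2 :: real) ^ nat \<bar>k\<bar>)" for k :: int
  have shift: "bij_betw (\<lambda>k. k - m) UNIV UNIV"
    by (rule bij_betwI[where g = "\<lambda>k. k + m"]) auto
  have "(\<integral>\<^sup>+ k. ennreal ((1 / 2 :: real) ^ nat \<bar>k - m\<bar>) \<partial>count_space UNIV)
      = (\<integral>\<^sup>+ k. f k \<partial>count_space UNIV)"
    using nn_integral_bij_count_space[OF shift, of f] by (simp add: f_def)
  also have "\<dots> = (\<integral>\<^sup>+ k. f k * indicator {0..} k + f k * indicator {..<0} k \<partial>count_space UNIV)"
    by (intro nn_integral_cong) (auto simp: indicator_def)
  also have "\<dots> = (\<integral>\<^sup>+ k. f k \<partial>count_space {0..}) + (\<integral>\<^sup>+ k. f k \<partial>count_space {..<0})"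
    by (simp add: nn_integral_add nn_integral_count_space_indicator)
  also have "(\<integral>\<^sup>+ k. f k \<partial>count_space {0..}) = (\<integral>\<^sup>+ n. f (int n) \<partial>count_space UNIV)"
    by (rule nn_integral_bij_count_space[symmetric]) (rule bij_betwI[where g = nat], auto)
  also have "\<dots> = 2"
    using nn_integral_half_power_nat by (simp add: f_def)
  also have "(\<integral>\<^sup>+ k. f k \<partial>count_space {..<0}) = (\<integral>\<^sup>+ n. f (- int n - 1) \<partial>count_space UNIV)"
    by (rule nn_integral_bij_count_space[symmetric])
      (rule bij_betwI[where g = "\<lambda>k. nat (- k - 1)"], auto)
  also have "\<dots> \<le> (\<integral>\<^sup>+ n. ennreal ((1 / 2 :: real) ^ n) \<partial>count_space UNIV)"
    by (intro nn_integral_mono ennreal_leI) (simp add: f_def)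
  also have "\<dots> = 2"
    by (rule nn_integral_half_power_nat)
  finally show ?thesis by simp
qed

lemma lp_enn_half_power_dist_le:
  assumes "1 \<le> p"
  shows "lp_enn p (\<lambda>k. ennreal ((1 / 2 :: real) ^ nat \<bar>k - m\<bar>)) \<le> 4"
proof (cases "p = top")
  case True
  have "ennreal ((1 / 2 :: real) ^ nat \<bar>k - m\<bar>) \<le> ennreal 4" for k
    by (intro ennreal_leI order_trans[OF power_le_one]) simp_all
  then show ?thesis
    using True by (simp add: lp_enn_def SUP_least)
next
  case False
  define q where "q = enn2real p"
  have q: "1 \<le> q"
    using assms False by (cases p) (auto simp: q_def)
  have "(\<integral>\<^sup>+ k. enn_powr (ennreal ((1 / 2 :: real) ^ nat \<bar>k - m\<bar>)) q \<partial>count_space UNIV)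
      \<le> (\<integral>\<^sup>+ k. ennreal ((1 / 2 :: real) ^ nat \<bar>k - m\<bar>) \<partial>count_space UNIV)"
    using q by (intro nn_integral_mono)
      (simp add: enn_powr_ennreal ennreal_leI powr_le_one_le power_le_one)
  also have "\<dots> \<le> 4"
    by (rule nn_integral_half_power_dist_le)
  finally have "lp_enn p (\<lambda>k. ennreal ((1 / 2 :: real) ^ nat \<bar>k - m\<bar>)) \<le> enn_powr 4 (1 / q)"
    using False q by (simp add: lp_enn_def q_def[symmetric] enn_powr_mono)
  also have "\<dots> \<le> 4"
    using q powr_mono[of "1 / q" 1 4] ennreal_leI[of "4 powr (1 / q)" 4]
    by (simp add: enn_powr_ennreal[of 4, simplified])
  finally show ?thesis .
qed

section \<open>Discretizing sequences\<close>

lemma strongly_increasing_step: "strongly_increasing a \<Longrightarrow> 2 * a k \<le> a (k + 1)"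
  unfolding strongly_increasing_def by (metis le_divide_eq)

lemma strongly_decreasing_step:
  assumes "strongly_decreasing a"
  shows "2 * a (k + 1) \<le> a k"
proof -
  have "a (k + 1) / a k \<le> 1 / 2" "0 < a k"
    using assms unfolding strongly_decreasing_def by auto
  then show ?thesis
    by (simp add: divide_le_eq)
qed

lemma strongly_increasing_ge_power:
  assumes "strongly_increasing a"
  shows "2 ^ j * a k \<le> a (k + int j)"
proof (induction j)
  case (Suc j)
  have "2 ^ Suc j * a k \<le> 2 * a (k + int j)"
    using Suc by simp
  also have "\<dots> \<le> a (k + int j + 1)"
    using assms by (rule strongly_increasing_step)
  finally show ?case
    by (simp add: ac_simps)
qed simp

lemma strongly_decreasing_power_le:
  assumes "strongly_decreasing a"
  shows "2 ^ j * a (k + int j) \<le> a k"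
proof (induction j)
  case (Suc j)
  have "2 ^ Suc j * a (k + int (Suc j)) = 2 ^ j * (2 * a (k + int j + 1))"
    by (simp add: ac_simps)
  also have "\<dots> \<le> 2 ^ j * a (k + int j)"
    by (intro mult_left_mono strongly_decreasing_step assms) simp
  also have "\<dots> \<le> a k"
    by (rule Suc)
  finally show ?case .
qed simp

lemma int_seq_crossing:
  fixes s :: "int \<Rightarrow> 'a::linorder"
  shows "s a \<le> r \<Longrightarrow> r < s (a + int n) \<Longrightarrow> \<exists>m. s m \<le> r \<and> r < s (m + 1)"
proof (induction n arbitrary: a)
  case (Suc n)
  then show ?case
    by (cases "s (a + 1) \<le> r") (auto simp: add.assoc)
qed simp

lemma strongly_increasing_crossing:
  assumes si: "strongly_increasing s" and r: "0 < r"
  shows "\<exists>m. s m \<le> r \<and> r < s (m + 1)"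
proof -
  have s0: "0 < s 0"
    using si unfolding strongly_increasing_def by auto
  obtain n1 :: nat where n1: "s 0 / r < 2 ^ n1"
    using real_arch_pow[of 2 "s 0 / r"] by auto
  obtain n2 :: nat where n2: "r / s 0 < 2 ^ n2"
    using real_arch_pow[of 2 "r / s 0"] by auto
  have "2 ^ n1 * s (- int n1) \<le> s 0"
    using strongly_increasing_ge_power[OF si, of n1 "- int n1"] by simp
  moreover have "s 0 < 2 ^ n1 * r"
    using n1 r by (simp add: divide_less_eq mult.commute)
  ultimately have below: "s (- int n1) \<le> r"
    by (smt (verit) mult_le_cancel_left_pos zero_less_power)
  have "2 ^ n2 * s 0 \<le> s (int n2)"
    using strongly_increasing_ge_power[OF si, of n2 0] by simp
  with n2 s0 have "r < s (- int n1 + int (n1 + n2))"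
    by (simp add: divide_less_eq mult.commute)
  then show ?thesis
    using below int_seq_crossing[of s "- int n1" r "n1 + n2"] by blast
qed

(* nondeg_qc without its limit conditions, which the argument never uses *)
definition quasi_concave :: "(real \<Rightarrow> real) \<Rightarrow> bool" where
  "quasi_concave \<psi> \<longleftrightarrow>
     (\<forall>t>0. 0 < \<psi> t) \<and>
     (\<forall>s t. 0 < s \<longrightarrow> s \<le> t \<longrightarrow> \<psi> s \<le> \<psi> t) \<and>
     (\<forall>s t. 0 < s \<longrightarrow> s \<le> t \<longrightarrow> \<psi> t / t \<le> \<psi> s / s)"

lemma quasi_concave_if_nondeg_qc: "nondeg_qc \<psi> \<Longrightarrow> quasi_concave \<psi>"
  unfolding nondeg_qc_def quasi_concave_def by blast

lemma quasi_concaveD: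
  assumes "quasi_concave \<psi>"
  shows quasi_concave_pos: "0 < t \<Longrightarrow> 0 < \<psi> t"
    and quasi_concave_mono: "0 < s \<Longrightarrow> s \<le> t \<Longrightarrow> \<psi> s \<le> \<psi> t"
    and quasi_concave_quotient_antimono: "0 < s \<Longrightarrow> s \<le> t \<Longrightarrow> \<psi> t / t \<le> \<psi> s / s"
  using assms unfolding quasi_concave_def by blast+

lemma discretizing_pos: "discretizing s \<psi> \<Longrightarrow> 0 < s k"
  unfolding discretizing_def strongly_increasing_def by blast

lemma discretizing_crossing_term_ge:
  assumes \<psi>: "quasi_concave \<psi>" and disc: "discretizing s \<psi>" and r: "0 < r"
  shows "\<exists>j. 1 / \<psi> r \<le> 2 * (min 1 (s j / r) / \<psi> (s j))"
proof -
  obtain Z1 Z2 where Z: "Z1 \<union> Z2 = UNIV"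
    and Z1: "\<And>k. k \<in> Z1 \<Longrightarrow> \<psi> (s (k + 1)) \<le> 2 * \<psi> (s k)"
    and Z2: "\<And>k. k \<in> Z2 \<Longrightarrow> \<psi> (s k) / s k \<le> 2 * (\<psi> (s (k + 1)) / s (k + 1))"
    using disc unfolding discretizing_def by blast
  have spos: "0 < s k" for k
    using disc by (rule discretizing_pos)
  have \<psi>pos: "0 < \<psi> t" if "0 < t" for t
    using \<psi> that by (rule quasi_concave_pos)
  obtain m where m: "s m \<le> r" "r < s (m + 1)"
    using strongly_increasing_crossing[OF _ r] disc unfolding discretizing_def by blast
  show ?thesis
  proof (cases "m \<in> Z1")
    case True
    have "\<psi> (s (m + 1)) \<le> 2 * \<psi> r"
      using Z1[OF True] quasi_concave_mono[OF \<psi> spos m(1)] by linarith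
    then have "1 / \<psi> r \<le> 2 * (1 / \<psi> (s (m + 1)))"
      using \<psi>pos[OF r] \<psi>pos[OF spos] by (simp add: field_simps)
    then show ?thesis
      using m r by (intro exI[of _ "m + 1"]) (simp add: min_def)
  next
    case False
    with Z have "\<psi> (s m) / s m \<le> 2 * (\<psi> (s (m + 1)) / s (m + 1))"
      by (intro Z2) blast
    also have "\<psi> (s (m + 1)) / s (m + 1) \<le> \<psi> r / r"
      using quasi_concave_quotient_antimono[OF \<psi> r] m(2) by simp
    finally have "\<psi> (s m) * r \<le> 2 * \<psi> r * s m"
      using spos[of m] r by (simp add: field_simps)
    then have "1 / \<psi> r \<le> 2 * ((s m / r) / \<psi> (s m))"
      using \<psi>pos[OF r] \<psi>pos[OF spos] r by (simp add: field_simps)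
    moreover have "min 1 (s m / r) = s m / r"
      using m(1) r by simp
    ultimately show ?thesis
      by metis
  qed
qed

lemma discretizing_term_le_above_crossing:
  assumes \<psi>: "quasi_concave \<psi>" and disc: "discretizing s \<psi>" and r: "0 < r"
    and m: "r < s (m + 1)" and k: "m < k"
  shows "min 1 (s k / r) / \<psi> (s k) \<le> 2 / \<psi> r * (1 / 2) ^ nat \<bar>k - m\<bar>"
proof -
  have spos: "0 < s k" for k
    using disc by (rule discretizing_pos)
  have si: "strongly_increasing (\<lambda>k. \<psi> (s k))"
    using disc unfolding discretizing_def by blast
  define j where "j = nat (k - m - 1)"
  have "2 ^ j * \<psi> r \<le> 2 ^ j * \<psi> (s (m + 1))"
    using quasi_concave_mono[OF \<psi> r] m by (intro mult_left_mono) simp_all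
  also have "\<dots> \<le> \<psi> (s k)"
    using strongly_increasing_ge_power[OF si, of j "m + 1"] k by (simp add: j_def)
  finally have "min 1 (s k / r) / \<psi> (s k) \<le> 1 / (2 ^ j * \<psi> r)"
    using quasi_concave_pos[OF \<psi> r] by (intro frac_le) simp_all
  moreover have "nat \<bar>k - m\<bar> = Suc j"
    using k by (simp add: j_def)
  moreover have "1 / (2 ^ j * \<psi> r) = 2 / \<psi> r * (1 / 2) ^ Suc j"
    using quasi_concave_pos[OF \<psi> r] by (simp add: power_one_over)
  ultimately show ?thesis
    by simp
qed

lemma discretizing_term_le_below_crossing:
  assumes \<psi>: "quasi_concave \<psi>" and disc: "discretizing s \<psi>" and r: "0 < r"
    and m: "s m \<le> r" and k: "k \<le> m"
  shows "min 1 (s k / r) / \<psi> (s k) \<le> 2 / \<psi> r * (1 / 2) ^ nat \<bar>k - m\<bar>"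
proof -
  have spos: "0 < s k" for k
    using disc by (rule discretizing_pos)
  have \<psi>pos: "0 < \<psi> r" "0 < \<psi> (s k)"
    using quasi_concave_pos[OF \<psi>] r spos by auto
  have sd: "strongly_decreasing (\<lambda>k. \<psi> (s k) / s k)"
    using disc unfolding discretizing_def by blast
  define j where "j = nat (m - k)"
  have "2 ^ j * (\<psi> r / r) \<le> 2 ^ j * (\<psi> (s m) / s m)"
    using quasi_concave_quotient_antimono[OF \<psi> spos m] by (intro mult_left_mono) simp_all
  also have "\<dots> \<le> \<psi> (s k) / s k"
    using strongly_decreasing_power_le[OF sd, of j k] k by (simp add: j_def)
  finally have "2 ^ j * \<psi> r * s k \<le> \<psi> (s k) * r"
    using r spos[of k] by (simp add: field_simps)
  then have "(s k / r) / \<psi> (s k) \<le> 1 / (2 ^ j * \<psi> r)"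
    using r \<psi>pos spos[of k] by (simp add: divide_simps) (simp add: ac_simps)
  moreover have "min 1 (s k / r) / \<psi> (s k) \<le> (s k / r) / \<psi> (s k)"
    using \<psi>pos by (intro divide_right_mono) simp_all
  moreover have "1 / (2 ^ j * \<psi> r) \<le> 2 / (2 ^ j * \<psi> r)"
    using \<psi>pos by (intro divide_right_mono) simp_all
  moreover have "nat \<bar>k - m\<bar> = j"
    using k by (simp add: j_def)
  ultimately show ?thesis
    by (simp add: power_one_over mult.commute)
qed

lemma lp_discretizing_ge:
  assumes "0 < p" and "quasi_concave \<psi>" and "discretizing s \<psi>" and "0 < r"
  shows "ennreal (1 / \<psi> r) \<le> 2 * lp_enn p (\<lambda>k. ennreal (min 1 (s k / r) / \<psi> (s k)))"
proof -
  obtain j where j: "1 / \<psi> r \<le> 2 * (min 1 (s j / r) / \<psi> (s j))"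
    using discretizing_crossing_term_ge[OF assms(2-4)] by blast
  have sj: "0 < s j"
    using assms(3) by (rule discretizing_pos)
  then have "0 < \<psi> (s j)"
    using assms(2) by (rule quasi_concave_pos[rotated])
  then have "0 \<le> min 1 (s j / r) / \<psi> (s j)"
    using sj assms(4) by simp
  with j have "ennreal (1 / \<psi> r) \<le> 2 * ennreal (min 1 (s j / r) / \<psi> (s j))"
    by (metis ennreal_leI ennreal_mult'' ennreal_numeral zero_le_numeral)
  also have "\<dots> \<le> 2 * lp_enn p (\<lambda>k. ennreal (min 1 (s k / r) / \<psi> (s k)))"
    using assms(1) by (intro mult_left_mono lp_enn_ge_component) simp_all
  finally show ?thesis .
qed

lemma lp_discretizing_le:
  assumes "1 \<le> p" and \<psi>: "quasi_concave \<psi>" and "discretizing s \<psi>" and r: "0 < r"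
  shows "lp_enn p (\<lambda>k. ennreal (min 1 (s k / r) / \<psi> (s k))) \<le> 8 * ennreal (1 / \<psi> r)"
proof -
  have \<psi>r: "0 < \<psi> r"
    using \<psi> r by (rule quasi_concave_pos)
  obtain m where "s m \<le> r" "r < s (m + 1)"
    using strongly_increasing_crossing[OF _ r] assms(3) unfolding discretizing_def by blast
  then have m: "min 1 (s k / r) / \<psi> (s k) \<le> 2 / \<psi> r * (1 / 2) ^ nat \<bar>k - m\<bar>" for k
    using discretizing_term_le_above_crossing[OF assms(2-4)] discretizing_term_le_below_crossing[OF assms(2-4)]
    by (cases "m < k") simp_all
  have "lp_enn p (\<lambda>k. ennreal (min 1 (s k / r) / \<psi> (s k)))
      \<le> lp_enn p (\<lambda>k. ennreal (2 / \<psi> r) * ennreal ((1 / 2 :: real) ^ nat \<bar>k - m\<bar>))"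
    using m \<psi>r by (intro lp_enn_mono) (simp add: ennreal_mult[symmetric] ennreal_leI)
  also have "\<dots> = ennreal (2 / \<psi> r) * lp_enn p (\<lambda>k. ennreal ((1 / 2 :: real) ^ nat \<bar>k - m\<bar>))"
    using assms(1) by (intro lp_enn_cmult) (simp add: order_less_le_trans[OF zero_less_one])
  also have "\<dots> \<le> ennreal (2 / \<psi> r) * 4"
    using assms(1) by (intro mult_left_mono lp_enn_half_power_dist_le) simp_all
  also have "\<dots> = 4 * ennreal (2 / \<psi> r)"
    by (rule mult.commute)
  also have "\<dots> = 8 * ennreal (1 / \<psi> r)"
    using \<psi>r by (simp add: numeral_mult_ennreal)
  finally show ?thesis .
qed

section \<open>The K-functional\<close>

lemma ennreal_le_cmult_INF:
  assumes C: "0 < C" and le: "\<And>i. i \<in> I \<Longrightarrow> a \<le> ennreal C * f i"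
  shows "a \<le> ennreal C * (INF i\<in>I. f i)"
proof -
  have cancel: "ennreal (1 / C) * (ennreal C * x) = x" "ennreal C * (ennreal (1 / C) * x) = x" for x
    using C by (simp_all add: mult.assoc[symmetric] ennreal_mult[symmetric])
  have "ennreal (1 / C) * a \<le> (INF i\<in>I. f i)"
  proof (rule INF_greatest)
    fix i assume "i \<in> I"
    then show "ennreal (1 / C) * a \<le> f i"
      using mult_left_mono[OF le[of i], of "ennreal (1 / C)"] by (simp add: cancel)
  qed
  then show ?thesis
    using mult_left_mono[of _ _ "ennreal C"] by (fastforce simp: cancel)
qed

lemma Kfun_le_cmult:
  assumes C: "0 < C" and N0: "\<And>x. N0 x \<le> ennreal C * M0 x" and N1: "\<And>x. N1 x \<le> ennreal C * M1 x"
  shows "Kfun N0 N1 t x \<le> ennreal C * Kfun M0 M1 t x"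
  unfolding Kfun_def
proof (rule ennreal_le_cmult_INF[OF C])
  fix z :: "'a \<times> 'a" assume z: "z \<in> {(x0, x1). x0 + x1 = x}"
  have "(INF z\<in>{(x0, x1). x0 + x1 = x}. N0 (fst z) + ennreal t * N1 (snd z))
      \<le> N0 (fst z) + ennreal t * N1 (snd z)"
    using z by (rule INF_lower)
  also have "\<dots> \<le> ennreal C * M0 (fst z) + ennreal t * (ennreal C * M1 (snd z))"
    by (intro add_mono mult_left_mono N0 N1) simp
  also have "\<dots> = ennreal C * (M0 (fst z) + ennreal t * M1 (snd z))"
    by (simp add: algebra_simps)
  finally show "(INF z\<in>{(x0, x1). x0 + x1 = x}. N0 (fst z) + ennreal t * N1 (snd z))
      \<le> ennreal C * (M0 (fst z) + ennreal t * M1 (snd z))" .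
qed

lemma Kfun_lp_le_lp_min:
  assumes p: "0 < p" and t: "0 \<le> t" and w0: "\<And>i. 0 \<le> w0 i" and w1: "\<And>i. 0 \<le> w1 i"
  shows "Kfun (lp_norm p w0) (lp_norm p w1) t x \<le> 2 * lp_norm p (\<lambda>i. min (w0 i) (t * w1 i)) x"
proof -
  define A where "A = {i. w0 i \<le> t * w1 i}"
  define x0 where "x0 i = (if i \<in> A then x i else 0)" for i
  define x1 where "x1 i = (if i \<in> A then 0 else x i)" for i
  have "x0 + x1 = x"
    by (auto simp: fun_eq_iff x0_def x1_def)
  then have "Kfun (lp_norm p w0) (lp_norm p w1) t x \<le> lp_norm p w0 x0 + ennreal t * lp_norm p w1 x1"
    unfolding Kfun_def by (intro INF_lower2[of "(x0, x1)"]) auto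
  also have "lp_norm p w0 x0 \<le> lp_norm p (\<lambda>i. min (w0 i) (t * w1 i)) x"
    unfolding lp_norm_def using t w1
    by (intro lp_enn_mono ennreal_leI) (auto simp: x0_def A_def min_def)
  also have "ennreal t * lp_norm p w1 x1 = lp_enn p (\<lambda>i. ennreal (t * (\<bar>x1 i\<bar> * w1 i)))"
    unfolding lp_norm_def lp_enn_cmult[OF p, symmetric] using t by (simp add: ennreal_mult')
  also have "\<dots> \<le> lp_norm p (\<lambda>i. min (w0 i) (t * w1 i)) x"
    unfolding lp_norm_def using t w0 w1
    by (intro lp_enn_mono ennreal_leI) (auto simp: x1_def A_def min_def mult_left_mono)
  finally show ?thesis
    by (simp add: mult_2)
qed

lemma lp_min_le_Kfun_lp:
  assumes p: "1 \<le> p" and t: "0 \<le> t" and w0: "\<And>i. 0 \<le> w0 i" and w1: "\<And>i. 0 \<le> w1 i"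
  shows "lp_norm p (\<lambda>i. min (w0 i) (t * w1 i)) x \<le> 4 * Kfun (lp_norm p w0) (lp_norm p w1) t x"
  unfolding Kfun_def
proof (rule ennreal_le_cmult_INF[where C = 4, simplified])
  fix z assume "z \<in> {(x0, x1). x0 + x1 = x}"
  then obtain a b where z: "z = (a, b)" and x: "x = a + b"
    by auto
  have "\<bar>x i\<bar> * min (w0 i) (t * w1 i) \<le> \<bar>a i\<bar> * w0 i + t * (\<bar>b i\<bar> * w1 i)" for i
  proof -
    have "\<bar>x i\<bar> * min (w0 i) (t * w1 i) \<le> (\<bar>a i\<bar> + \<bar>b i\<bar>) * min (w0 i) (t * w1 i)"
      using x t w0[of i] w1[of i] by (intro mult_right_mono) auto
    also have "\<dots> \<le> \<bar>a i\<bar> * w0 i + \<bar>b i\<bar> * (t * w1 i)"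
      unfolding distrib_right by (intro add_mono mult_left_mono) auto
    finally show ?thesis
      by (simp add: ac_simps)
  qed
  then have "lp_norm p (\<lambda>i. min (w0 i) (t * w1 i)) x
      \<le> lp_enn p (\<lambda>i. ennreal (\<bar>a i\<bar> * w0 i) + ennreal t * ennreal (\<bar>b i\<bar> * w1 i))"
    unfolding lp_norm_def using t w0 w1
    by (intro lp_enn_mono) (simp add: ennreal_leI ennreal_plus[symmetric] ennreal_mult[symmetric] del: ennreal_plus)
  also have "\<dots> \<le> 4 * (lp_enn p (\<lambda>i. ennreal (\<bar>a i\<bar> * w0 i))
      + lp_enn p (\<lambda>i. ennreal t * ennreal (\<bar>b i\<bar> * w1 i)))"
    by (rule lp_enn_add_le[OF p])
  also have "\<dots> = 4 * (lp_norm p w0 a + ennreal t * lp_norm p w1 b)"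
    using p by (simp add: lp_norm_def lp_enn_cmult order_less_le_trans[OF zero_less_one])
  finally show "lp_norm p (\<lambda>i. min (w0 i) (t * w1 i)) x
      \<le> 4 * (lp_norm p w0 (fst z) + ennreal t * lp_norm p w1 (snd z))"
    by (simp add: z)
qed

section \<open>Interpolation norms\<close>

lemma interp_norm_le_cmult:
  assumes p: "0 < p" and C: "0 < C"
    and N0: "\<And>x. N0 x \<le> ennreal C * M0 x" and N1: "\<And>x. N1 x \<le> ennreal C * M1 x"
  shows "interp_norm N0 N1 \<psi> s p x \<le> ennreal C * interp_norm M0 M1 \<psi> s p x"
  unfolding interp_norm_def lp_enn_cmult[OF p, symmetric]
proof (rule lp_enn_mono)
  fix k
  have "Kfun N0 N1 (s k) x / ennreal (\<psi> (s k)) \<le> ennreal C * Kfun M0 M1 (s k) x / ennreal (\<psi> (s k))"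
    by (intro divide_right_mono_ennreal Kfun_le_cmult[OF C N0 N1])
  then show "Kfun N0 N1 (s k) x / ennreal (\<psi> (s k)) \<le> ennreal C * (Kfun M0 M1 (s k) x / ennreal (\<psi> (s k)))"
    by (simp add: ennreal_times_divide)
qed

lemma equiv_norms_trans [trans]:
  assumes "equiv_norms N M" and "equiv_norms M L"
  shows "equiv_norms N L"
proof -
  obtain C where C: "0 < C" "\<And>x. N x \<le> ennreal C * M x \<and> M x \<le> ennreal C * N x"
    using assms(1) unfolding equiv_norms_def by blast
  obtain D where D: "0 < D" "\<And>x. M x \<le> ennreal D * L x \<and> L x \<le> ennreal D * M x"
    using assms(2) unfolding equiv_norms_def by blast
  have "N x \<le> ennreal (C * D) * L x \<and> L x \<le> ennreal (C * D) * N x" for x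
  proof
    have "N x \<le> ennreal C * (ennreal D * L x)"
      using C(2)[of x] D(2)[of x] by (meson mult_left_mono order_trans zero_le)
    then show "N x \<le> ennreal (C * D) * L x"
      using C D by (simp add: ennreal_mult mult.assoc)
    have "L x \<le> ennreal D * (ennreal C * N x)"
      using C(2)[of x] D(2)[of x] by (meson mult_left_mono order_trans zero_le)
    then show "L x \<le> ennreal (C * D) * N x"
      using C D by (simp add: ennreal_mult ac_simps)
  qed
  then show ?thesis
    unfolding equiv_norms_def using C D by (intro exI[of _ "C * D"]) simp
qed

lemma equiv_norms_interp_norm:
  assumes p: "0 < p" and "equiv_norms N0 M0" and "equiv_norms N1 M1"
  shows "equiv_norms (interp_norm N0 N1 \<psi> s p) (interp_norm M0 M1 \<psi> s p)"
proof -
  obtain C0 where C0: "0 < C0" "\<And>x. N0 x \<le> ennreal C0 * M0 x \<and> M0 x \<le> ennreal C0 * N0 x"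
    using assms(2) unfolding equiv_norms_def by blast
  obtain C1 where C1: "0 < C1" "\<And>x. N1 x \<le> ennreal C1 * M1 x \<and> M1 x \<le> ennreal C1 * N1 x"
    using assms(3) unfolding equiv_norms_def by blast
  define C where "C = max C0 C1"
  have C: "0 < C"
    using C0 C1 by (simp add: C_def)
  have "ennreal C0 \<le> ennreal C" "ennreal C1 \<le> ennreal C"
    by (auto simp: C_def intro: ennreal_leI)
  then have "N0 x \<le> ennreal C * M0 x" "M0 x \<le> ennreal C * N0 x"
    "N1 x \<le> ennreal C * M1 x" "M1 x \<le> ennreal C * N1 x" for x
    using C0(2)[of x] C1(2)[of x] by (meson mult_right_mono order_trans zero_le)+
  then show ?thesis
    unfolding equiv_norms_def by (intro exI[of _ C] conjI allI C interp_norm_le_cmult[OF p C])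
qed

lemma lp_min_interp_swap:
  assumes p: "0 < p" and w0: "\<And>i. 0 < w0 i" and w1: "\<And>i. 0 < w1 i"
    and s: "\<And>k. 0 < s k" and \<psi>: "\<And>k. 0 < \<psi> (s k)"
  shows "lp_enn p (\<lambda>k. lp_norm p (\<lambda>i. min (w0 i) (s k * w1 i)) x / ennreal (\<psi> (s k)))
    = lp_enn p (\<lambda>i. ennreal (\<bar>x i\<bar> * w0 i)
        * lp_enn p (\<lambda>k. ennreal (min 1 (s k / (w0 i / w1 i)) / \<psi> (s k))))"
proof -
  have factor: "ennreal (1 / \<psi> (s k)) * ennreal (\<bar>x i\<bar> * min (w0 i) (s k * w1 i))
      = ennreal (\<bar>x i\<bar> * w0 i) * ennreal (min 1 (s k / (w0 i / w1 i)) / \<psi> (s k))" for k i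
  proof -
    have "min (w0 i) (s k * w1 i) = w0 i * min 1 (s k / (w0 i / w1 i))"
      using w0[of i] w1[of i] by (simp add: min_mult_distrib_left)
    then show ?thesis
      using w0[of i] w1[of i] s[of k] \<psi>[of k]
      by (simp add: ennreal_mult[symmetric] ac_simps)
  qed
  have "lp_norm p (\<lambda>i. min (w0 i) (s k * w1 i)) x / ennreal (\<psi> (s k))
      = lp_enn p (\<lambda>i. ennreal (\<bar>x i\<bar> * w0 i) * ennreal (min 1 (s k / (w0 i / w1 i)) / \<psi> (s k)))" for k
  proof -
    have "lp_norm p (\<lambda>i. min (w0 i) (s k * w1 i)) x / ennreal (\<psi> (s k))
        = ennreal (1 / \<psi> (s k)) * lp_norm p (\<lambda>i. min (w0 i) (s k * w1 i)) x"
      using \<psi>[of k] by (simp add: divide_ennreal_def inverse_ennreal inverse_eq_divide mult.commute)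
    also have "\<dots> = lp_enn p (\<lambda>i. ennreal (1 / \<psi> (s k)) * ennreal (\<bar>x i\<bar> * min (w0 i) (s k * w1 i)))"
      unfolding lp_norm_def by (rule lp_enn_cmult[OF p, symmetric])
    finally show ?thesis
      by (simp only: factor)
  qed
  then show ?thesis
    by (simp add: lp_enn_swap[OF p] lp_enn_cmult[OF p])
qed

lemma lp_norm_quasi_concave_weight_eq:
  assumes "\<And>i. 0 < w0 i" and "\<And>i. 0 < w1 i" and "quasi_concave \<psi>"
  shows "lp_norm p (\<lambda>i. w0 i / \<psi> (w0 i / w1 i)) x
    = lp_enn p (\<lambda>i. ennreal (\<bar>x i\<bar> * w0 i) * ennreal (1 / \<psi> (w0 i / w1 i)))"
  unfolding lp_norm_def
proof (intro arg_cong[where f = "lp_enn p"] ext)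
  fix i
  have "0 < \<psi> (w0 i / w1 i)"
    using assms by (simp add: quasi_concave_pos)
  then show "ennreal (\<bar>x i\<bar> * (w0 i / \<psi> (w0 i / w1 i)))
      = ennreal (\<bar>x i\<bar> * w0 i) * ennreal (1 / \<psi> (w0 i / w1 i))"
    using assms(1)[of i] by (simp add: ennreal_mult[symmetric])
qed

lemma interp_norm_weighted_lp_le:
  assumes p: "1 \<le> p" and w0: "\<And>i. 0 < w0 i" and w1: "\<And>i. 0 < w1 i"
    and \<psi>: "quasi_concave \<psi>" and disc: "discretizing s \<psi>"
  shows "interp_norm (lp_norm p w0) (lp_norm p w1) \<psi> s p x
    \<le> 16 * lp_norm p (\<lambda>i. w0 i / \<psi> (w0 i / w1 i)) x"
proof -
  have p0: "0 < p"
    using p by (simp add: order_less_le_trans[OF zero_less_one])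
  have s: "0 < s k" for k
    using disc by (rule discretizing_pos)
  have \<psi>s: "0 < \<psi> (s k)" for k
    using \<psi> s by (rule quasi_concave_pos)
  have "Kfun (lp_norm p w0) (lp_norm p w1) (s k) x \<le> 2 * lp_norm p (\<lambda>i. min (w0 i) (s k * w1 i)) x" for k
    using p0 s[of k] w0 w1 by (intro Kfun_lp_le_lp_min) (simp_all add: less_imp_le)
  then have "interp_norm (lp_norm p w0) (lp_norm p w1) \<psi> s p x
      \<le> lp_enn p (\<lambda>k. 2 * (lp_norm p (\<lambda>i. min (w0 i) (s k * w1 i)) x / ennreal (\<psi> (s k))))"
    unfolding interp_norm_def ennreal_times_divide by (intro lp_enn_mono divide_right_mono_ennreal)
  also have "\<dots> = 2 * lp_enn p (\<lambda>i. ennreal (\<bar>x i\<bar> * w0 i)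
      * lp_enn p (\<lambda>k. ennreal (min 1 (s k / (w0 i / w1 i)) / \<psi> (s k))))"
    by (simp add: lp_enn_cmult[OF p0] lp_min_interp_swap[where \<psi> = \<psi>, OF p0 w0 w1 s \<psi>s])
  also have "\<dots> \<le> 2 * lp_enn p (\<lambda>i. ennreal (\<bar>x i\<bar> * w0 i) * (8 * ennreal (1 / \<psi> (w0 i / w1 i))))"
    using w0 w1 by (intro mult_left_mono lp_enn_mono lp_discretizing_le[OF p \<psi> disc]) simp_all
  also have "\<dots> = 16 * lp_norm p (\<lambda>i. w0 i / \<psi> (w0 i / w1 i)) x"
    unfolding lp_norm_quasi_concave_weight_eq[OF w0 w1 \<psi>] mult.left_commute[of _ 8]
    by (simp add: lp_enn_cmult[OF p0])
  finally show ?thesis .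
qed

lemma weighted_lp_le_interp_norm:
  assumes p: "1 \<le> p" and w0: "\<And>i. 0 < w0 i" and w1: "\<And>i. 0 < w1 i"
    and \<psi>: "quasi_concave \<psi>" and disc: "discretizing s \<psi>"
  shows "lp_norm p (\<lambda>i. w0 i / \<psi> (w0 i / w1 i)) x
    \<le> 8 * interp_norm (lp_norm p w0) (lp_norm p w1) \<psi> s p x"
proof -
  have p0: "0 < p"
    using p by (simp add: order_less_le_trans[OF zero_less_one])
  have s: "0 < s k" for k
    using disc by (rule discretizing_pos)
  have \<psi>s: "0 < \<psi> (s k)" for k
    using \<psi> s by (rule quasi_concave_pos)
  have "lp_norm p (\<lambda>i. w0 i / \<psi> (w0 i / w1 i)) x
      \<le> lp_enn p (\<lambda>i. ennreal (\<bar>x i\<bar> * w0 i)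
          * (2 * lp_enn p (\<lambda>k. ennreal (min 1 (s k / (w0 i / w1 i)) / \<psi> (s k)))))"
    unfolding lp_norm_quasi_concave_weight_eq[OF w0 w1 \<psi>]
    using w0 w1 by (intro lp_enn_mono mult_left_mono lp_discretizing_ge[OF p0 \<psi> disc]) simp_all
  also have "\<dots> = 2 * lp_enn p (\<lambda>k. lp_norm p (\<lambda>i. min (w0 i) (s k * w1 i)) x / ennreal (\<psi> (s k)))"
    unfolding mult.left_commute[of _ 2]
    by (simp add: lp_enn_cmult[OF p0] lp_min_interp_swap[where \<psi> = \<psi>, OF p0 w0 w1 s \<psi>s])
  also have "\<dots> \<le> 2 * lp_enn p (\<lambda>k. 4 * Kfun (lp_norm p w0) (lp_norm p w1) (s k) x / ennreal (\<psi> (s k)))"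
    using p s w0 w1
    by (intro mult_left_mono lp_enn_mono divide_right_mono_ennreal lp_min_le_Kfun_lp) (simp_all add: less_imp_le)
  also have "\<dots> = 8 * interp_norm (lp_norm p w0) (lp_norm p w1) \<psi> s p x"
    unfolding interp_norm_def ennreal_times_divide[symmetric]
    by (simp add: lp_enn_cmult[OF p0])
  finally show ?thesis .
qed

lemma equiv_norms_interp_weighted_lp:
  assumes "1 \<le> p" and "\<And>i. 0 < w0 i" and "\<And>i. 0 < w1 i"
    and "quasi_concave \<psi>" and "discretizing s \<psi>"
  shows "equiv_norms (interp_norm (lp_norm p w0) (lp_norm p w1) \<psi> s p)
    (lp_norm p (\<lambda>i. w0 i / \<psi> (w0 i / w1 i)))"
  unfolding equiv_norms_def
proof (intro exI[of _ 16] conjI allI)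
  fix x
  show "interp_norm (lp_norm p w0) (lp_norm p w1) \<psi> s p x
      \<le> ennreal 16 * lp_norm p (\<lambda>i. w0 i / \<psi> (w0 i / w1 i)) x"
    using interp_norm_weighted_lp_le[OF assms] by simp
  have "lp_norm p (\<lambda>i. w0 i / \<psi> (w0 i / w1 i)) x
      \<le> 8 * interp_norm (lp_norm p w0) (lp_norm p w1) \<psi> s p x"
    by (rule weighted_lp_le_interp_norm[OF assms])
  also have "\<dots> \<le> 16 * interp_norm (lp_norm p w0) (lp_norm p w1) \<psi> s p x"
    by (intro mult_right_mono) simp_all
  finally show "lp_norm p (\<lambda>i. w0 i / \<psi> (w0 i / w1 i)) x
      \<le> ennreal 16 * interp_norm (lp_norm p w0) (lp_norm p w1) \<psi> s p x"
    by simp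
qed simp

theorem corollary3p6:
  fixes p :: ennreal and \<phi>0 \<phi>1 \<phi> :: "real \<Rightarrow> real"
    and tt s0 s1 s :: "int \<Rightarrow> real"
  assumes "1 \<le> p"
    and "nondeg_qc \<phi>0" and "nondeg_qc \<phi>1" and "nondeg_qc \<phi>"
    and "discretizing tt (comp_fun \<phi> \<phi>0 \<phi>1)"
    and "discretizing s0 \<phi>0" and "discretizing s1 \<phi>1" and "discretizing s \<phi>"
  shows "equiv_norms
     (interp_norm
        (interp_norm (lp_norm p (\<lambda>_. 1)) (lp_norm p (\<lambda>i. 1 / tt i)) \<phi>0 s0 p)
        (interp_norm (lp_norm p (\<lambda>_. 1)) (lp_norm p (\<lambda>i. 1 / tt i)) \<phi>1 s1 p)
        \<phi> s p)
     (lp_norm p (\<lambda>i. 1 / comp_fun \<phi> \<phi>0 \<phi>1 (tt i)))"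
proof -
  note p = assms(1)
  have tt: "0 < tt i" for i
    using assms(5) by (rule discretizing_pos)
  have qc0: "quasi_concave \<phi>0" and qc1: "quasi_concave \<phi>1" and qc: "quasi_concave \<phi>"
    using assms(2-4) by (simp_all add: quasi_concave_if_nondeg_qc)
  have \<phi>0: "0 < \<phi>0 (tt i)" and \<phi>1: "0 < \<phi>1 (tt i)" for i
    using tt by (simp_all add: quasi_concave_pos[OF qc0] quasi_concave_pos[OF qc1])
  have "equiv_norms (interp_norm (lp_norm p (\<lambda>_. 1)) (lp_norm p (\<lambda>i. 1 / tt i)) \<phi>0 s0 p)
      (lp_norm p (\<lambda>i. 1 / \<phi>0 (tt i)))"
    using equiv_norms_interp_weighted_lp[OF p _ _ qc0 assms(6), of "\<lambda>_. 1" "\<lambda>i. 1 / tt i"] tt by simp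
  moreover have "equiv_norms (interp_norm (lp_norm p (\<lambda>_. 1)) (lp_norm p (\<lambda>i. 1 / tt i)) \<phi>1 s1 p)
      (lp_norm p (\<lambda>i. 1 / \<phi>1 (tt i)))"
    using equiv_norms_interp_weighted_lp[OF p _ _ qc1 assms(7), of "\<lambda>_. 1" "\<lambda>i. 1 / tt i"] tt by simp
  ultimately have "equiv_norms
     (interp_norm
        (interp_norm (lp_norm p (\<lambda>_. 1)) (lp_norm p (\<lambda>i. 1 / tt i)) \<phi>0 s0 p)
        (interp_norm (lp_norm p (\<lambda>_. 1)) (lp_norm p (\<lambda>i. 1 / tt i)) \<phi>1 s1 p)
        \<phi> s p)
     (interp_norm (lp_norm p (\<lambda>i. 1 / \<phi>0 (tt i))) (lp_norm p (\<lambda>i. 1 / \<phi>1 (tt i))) \<phi> s p)"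
    using p by (intro equiv_norms_interp_norm) (simp_all add: order_less_le_trans[OF zero_less_one])
  also have "equiv_norms \<dots> (lp_norm p (\<lambda>i. 1 / comp_fun \<phi> \<phi>0 \<phi>1 (tt i)))"
    using equiv_norms_interp_weighted_lp[OF p _ _ qc assms(8),
        of "\<lambda>i. 1 / \<phi>0 (tt i)" "\<lambda>i. 1 / \<phi>1 (tt i)"] \<phi>0 \<phi>1
    by (simp add: comp_fun_def)
  finally show ?thesis .
qed

end
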